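(* Let $X$ be a uniformizable Alexandroff space. Then $X$ is a functional Alexandroff space if and only if $V(x)$ is finite for every $x\in X$.
   Context: For a topological space $X$ and $a\in X$, $V(a):=\bigcap\{U: U\text{ open}, a\in U\}$; $X$ is Alexandroff if every $V(a)$ is open. $X$ is uniformizable if its topology is induced by some uniform structure on $X$. For a map $f:X\to X$ and $a\in X$ let $V_f(a):=\bigcup_{n\ge 0}f^{-n}(a)=\{x\in X:\exists n\ge0,\ f^n(x)=a\}$. The sets $\{V_f(a):a\in X\}$ form a basis of a topology on $X$ (the functional Alexandroff topology associated to $f$), in which $V_f(a)$ is the smallest open neighbourhood of $a$. A topological space $X$ is a functional Alexandroff space if there is $f:X\to X$ whose functional Alexandroff topology equals the topology of $X$. *)

theory Defs
  imports "HOL-Analysis.Analysis"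
begin

definition min_nbhd :: "'a topology \<Rightarrow> 'a \<Rightarrow> 'a set" where
  "min_nbhd T a = \<Inter>{U. openin T U \<and> a \<in> U}"

definition alexandroff_space :: "'a topology \<Rightarrow> bool" where
  "alexandroff_space T \<longleftrightarrow> (\<forall>a\<in>topspace T. openin T (min_nbhd T a))"

definition is_uniformity :: "'a set \<Rightarrow> ('a \<times> 'a) set set \<Rightarrow> bool" where
  "is_uniformity X \<U> \<longleftrightarrow>
     \<U> \<noteq> {} \<and>
     (\<forall>E\<in>\<U>. E \<subseteq> X \<times> X \<and> Id_on X \<subseteq> E) \<and>
     (\<forall>E\<in>\<U>. \<forall>F. E \<subseteq> F \<and> F \<subseteq> X \<times> X \<longrightarrow> F \<in> \<U>) \<and>
     (\<forall>E\<in>\<U>. \<forall>F\<in>\<U>. E \<inter> F \<in> \<U>) \<and>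
     (\<forall>E\<in>\<U>. E\<inverse> \<in> \<U>) \<and>
     (\<forall>E\<in>\<U>. \<exists>F\<in>\<U>. F O F \<subseteq> E)"

definition uniformizable :: "'a topology \<Rightarrow> bool" where
  "uniformizable T \<longleftrightarrow> (\<exists>\<U>. is_uniformity (topspace T) \<U> \<and>
     (\<forall>U. openin T U \<longleftrightarrow>
        U \<subseteq> topspace T \<and> (\<forall>x\<in>U. \<exists>E\<in>\<U>. E `` {x} \<subseteq> U)))"

definition fun_nbhd :: "'a set \<Rightarrow> ('a \<Rightarrow> 'a) \<Rightarrow> 'a \<Rightarrow> 'a set" where
  "fun_nbhd X f a = {x\<in>X. \<exists>n. (f ^^ n) x = a}"

definition functional_alexandroff :: "'a topology \<Rightarrow> bool" where
  "functional_alexandroff T \<longleftrightarrow> (\<exists>f. (\<forall>x\<in>topspace T. f x \<in> topspace T) \<and>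
     (\<forall>U. openin T U \<longleftrightarrow>
        (\<exists>\<B>. \<B> \<subseteq> fun_nbhd (topspace T) f ` topspace T \<and> U = \<Union>\<B>)))"

end

theory Submission
  imports Defs "HOL-Combinatorics.Cycles" "HOL-Combinatorics.Orbits"
begin

text \<open>In a uniformizable space the specialization preorder is symmetric, so the minimal
  neighbourhoods \<open>V(x)\<close> partition \<open>X\<close>. For a functional Alexandroff topology \<open>V(a) = V\<^sub>f(a)\<close>;
  symmetry then forces \<open>a\<close> to be a periodic point of \<open>f\<close> whose orbit contains \<open>V(a)\<close>, so \<open>V(a)\<close>
  is finite. Conversely, if every block \<open>V(a)\<close> is finite, a map \<open>f\<close> that cycles through each
  block has \<open>V\<^sub>f(a) = V(a)\<close>, and in an Alexandroff space these sets form a basis.\<close>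

lemma in_min_nbhd: "a \<in> min_nbhd T a"
  unfolding min_nbhd_def by auto

lemma min_nbhd_subset_openin: "openin T U \<Longrightarrow> a \<in> U \<Longrightarrow> min_nbhd T a \<subseteq> U"
  unfolding min_nbhd_def by auto

lemma min_nbhd_subset_topspace: "a \<in> topspace T \<Longrightarrow> min_nbhd T a \<subseteq> topspace T"
  by (simp add: min_nbhd_subset_openin)

lemma min_nbhd_subset: "b \<in> min_nbhd T a \<Longrightarrow> min_nbhd T b \<subseteq> min_nbhd T a"
  unfolding min_nbhd_def by auto

lemma openin_eq_Union_min_nbhd: "openin T U \<Longrightarrow> U = (\<Union>a\<in>U. min_nbhd T a)"
  using in_min_nbhd min_nbhd_subset_openin by fastforce

lemma is_uniformityD:
  assumes "is_uniformity X \<U>" "E \<in> \<U>"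
  shows "E \<subseteq> X \<times> X" "Id_on X \<subseteq> E" "E\<inverse> \<in> \<U>" "\<exists>F\<in>\<U>. F O F \<subseteq> E"
  using assms unfolding is_uniformity_def by meson+

lemma uniform_interior_openin:
  assumes unif: "is_uniformity (topspace T) \<U>"
    and open_iff: "\<And>U. openin T U \<longleftrightarrow> U \<subseteq> topspace T \<and> (\<forall>x\<in>U. \<exists>E\<in>\<U>. E `` {x} \<subseteq> U)"
  shows "openin T {z \<in> topspace T. \<exists>H\<in>\<U>. H `` {z} \<subseteq> S}" (is "openin T ?W")
proof -
  have "\<exists>E\<in>\<U>. E `` {z} \<subseteq> ?W" if "z \<in> ?W" for z
  proof -
    obtain H where H: "H \<in> \<U>" "H `` {z} \<subseteq> S"
      using \<open>z \<in> ?W\<close> by blast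
    obtain K where K: "K \<in> \<U>" "K O K \<subseteq> H"
      using is_uniformityD(4)[OF unif H(1)] by blast
    have "K `` {w} \<subseteq> S" if "w \<in> K `` {z}" for w
      using that K(2) H(2) by blast
    moreover have "K `` {z} \<subseteq> topspace T"
      using is_uniformityD(1)[OF unif K(1)] by blast
    ultimately show ?thesis
      using K(1) by blast
  qed
  then show ?thesis
    by (subst open_iff) blast
qed

lemma uniformizable_min_nbhd_sym:
  assumes "uniformizable T" and x: "x \<in> topspace T" and y: "y \<in> min_nbhd T x"
  shows "x \<in> min_nbhd T y"
proof -
  obtain \<U> where unif: "is_uniformity (topspace T) \<U>"
    and open_iff: "\<And>U. openin T U \<longleftrightarrow> U \<subseteq> topspace T \<and> (\<forall>x\<in>U. \<exists>E\<in>\<U>. E `` {x} \<subseteq> U)"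
    using assms(1) unfolding uniformizable_def by blast
  have "x \<in> V" if V: "openin T V" "y \<in> V" for V
  proof -
    obtain E where E: "E \<in> \<U>" "E `` {y} \<subseteq> V"
      using V open_iff by blast
    define W where "W = {z \<in> topspace T. \<exists>H\<in>\<U>. H `` {z} \<subseteq> E\<inverse> `` {x}}"
    have "x \<in> W"
      using x is_uniformityD(3)[OF unif E(1)] unfolding W_def by blast
    moreover have "openin T W"
      unfolding W_def using unif open_iff by (rule uniform_interior_openin)
    ultimately have "y \<in> W"
      using y unfolding min_nbhd_def by blast
    then obtain H where "H \<in> \<U>" "H `` {y} \<subseteq> E\<inverse> `` {x}" "y \<in> topspace T"
      unfolding W_def by blast
    moreover from this have "(y, y) \<in> H"
      using is_uniformityD(2)[OF unif] by blast
    ultimately show "x \<in> V"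
      using E(2) by blast
  qed
  then show ?thesis
    unfolding min_nbhd_def by blast
qed

lemma uniformizable_min_nbhd_eq:
  assumes "uniformizable T" "a \<in> topspace T" "b \<in> min_nbhd T a"
  shows "min_nbhd T b = min_nbhd T a"
proof (rule subset_antisym)
  show "min_nbhd T b \<subseteq> min_nbhd T a"
    using assms(3) by (rule min_nbhd_subset)
  have "a \<in> min_nbhd T b"
    using assms by (rule uniformizable_min_nbhd_sym)
  then show "min_nbhd T a \<subseteq> min_nbhd T b"
    by (rule min_nbhd_subset)
qed

lemma fun_nbhd_trans:
  assumes "x \<in> fun_nbhd X f y" "y \<in> fun_nbhd X f z"
  shows "x \<in> fun_nbhd X f z"
proof -
  obtain m n where "(f ^^ m) x = y" "(f ^^ n) y = z" "x \<in> X"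
    using assms unfolding fun_nbhd_def by blast
  then have "(f ^^ (n + m)) x = z"
    by (simp add: funpow_add)
  then show ?thesis
    using \<open>x \<in> X\<close> unfolding fun_nbhd_def by blast
qed

lemma self_in_fun_nbhd: "a \<in> X \<Longrightarrow> a \<in> fun_nbhd X f a"
  unfolding fun_nbhd_def by (auto intro: exI[of _ 0])

lemma functional_min_nbhd_eq_fun_nbhd:
  assumes open_iff: "\<And>U. openin T U \<longleftrightarrow>
      (\<exists>\<B>. \<B> \<subseteq> fun_nbhd (topspace T) f ` topspace T \<and> U = \<Union>\<B>)"
    and a: "a \<in> topspace T"
  shows "min_nbhd T a = fun_nbhd (topspace T) f a"
proof
  have "openin T (fun_nbhd (topspace T) f a)"
    unfolding open_iff using a by (intro exI[of _ "{fun_nbhd (topspace T) f a}"]) auto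
  then show "min_nbhd T a \<subseteq> fun_nbhd (topspace T) f a"
    using a by (simp add: min_nbhd_subset_openin self_in_fun_nbhd)
next
  have "y \<in> U" if y: "y \<in> fun_nbhd (topspace T) f a" and U: "openin T U" "a \<in> U" for y U
  proof -
    obtain \<B> where \<B>: "\<B> \<subseteq> fun_nbhd (topspace T) f ` topspace T" "U = \<Union>\<B>"
      using open_iff[THEN iffD1, OF U(1)] by blast
    obtain S where S: "S \<in> \<B>" "a \<in> S"
      using U(2) \<B>(2) by blast
    then obtain b where "S = fun_nbhd (topspace T) f b"
      using \<B>(1) by blast
    then have "y \<in> S"
      using S(2) y fun_nbhd_trans by metis
    then show "y \<in> U"
      using S(1) \<B>(2) by blast
  qed
  then show "fun_nbhd (topspace T) f a \<subseteq> min_nbhd T a"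
    unfolding min_nbhd_def by blast
qed

lemma functional_alexandroffE:
  assumes "functional_alexandroff T"
  obtains f where "\<forall>x\<in>topspace T. f x \<in> topspace T"
    and "\<And>a. a \<in> topspace T \<Longrightarrow> min_nbhd T a = fun_nbhd (topspace T) f a"
proof -
  obtain f where f_into: "\<forall>x\<in>topspace T. f x \<in> topspace T"
    and open_iff: "\<forall>U. openin T U \<longleftrightarrow>
      (\<exists>\<B>. \<B> \<subseteq> fun_nbhd (topspace T) f ` topspace T \<and> U = \<Union>\<B>)"
    using assms unfolding functional_alexandroff_def by blast
  show thesis
    by (rule that[OF f_into functional_min_nbhd_eq_fun_nbhd[OF open_iff[rule_format]]])
qed

lemma functional_alexandroff_finite_min_nbhd:
  assumes "uniformizable T" "functional_alexandroff T" and a: "a \<in> topspace T"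
  shows "finite (min_nbhd T a)"
proof -
  obtain f where f_into: "\<forall>x\<in>topspace T. f x \<in> topspace T"
    and V_eq: "\<And>x. x \<in> topspace T \<Longrightarrow> min_nbhd T x = fun_nbhd (topspace T) f x"
    using assms(2) by (rule functional_alexandroffE) (rule that)
  have fa: "f a \<in> topspace T"
    using f_into a by blast
  have "(f ^^ 1) a = f a"
    by simp
  then have "a \<in> min_nbhd T (f a)"
    using V_eq[OF fa] a unfolding fun_nbhd_def by blast
  then have "f a \<in> min_nbhd T a"
    by (rule uniformizable_min_nbhd_sym[OF assms(1) fa])
  then obtain n where "(f ^^ n) (f a) = a"
    using V_eq[OF a] unfolding fun_nbhd_def by blast
  then have "(f ^^ Suc n) a = a"
    by (simp add: funpow_swap1)
  then have periodic: "a \<in> orbit f a"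
    unfolding orbit_altdef by (metis (mono_tags, lifting) mem_Collect_eq zero_less_Suc)
  have "min_nbhd T a \<subseteq> orbit f a"
  proof
    fix x assume x: "x \<in> min_nbhd T a"
    then have "x \<in> topspace T"
      using min_nbhd_subset_topspace[OF a] by blast
    moreover have "a \<in> min_nbhd T x"
      by (rule uniformizable_min_nbhd_sym[OF assms(1) a x])
    ultimately obtain m where "(f ^^ m) a = x"
      using V_eq unfolding fun_nbhd_def by blast
    then show "x \<in> orbit f a"
      unfolding orbit_altdef_self_in[OF periodic] by blast
  qed
  then show ?thesis
    using finite_orbit[OF periodic] finite_subset by blast
qed

lemma finite_ex_cyclic_on:
  assumes "finite S" "S \<noteq> {}"
  shows "\<exists>f. cyclic_on f S"
proof -
  obtain cs where cs: "set cs = S" "distinct cs"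
    using finite_distinct_list[OF assms(1)] by blast
  define c where "c = cycle_of_list cs"
  define s where "s = cs ! 0"
  have len: "0 < length cs"
    using cs(1) assms(2) by auto
  have s: "s \<in> S"
    using cs(1) len unfolding s_def by auto
  have "orbit c s = S"
  proof
    show "orbit c s \<subseteq> S"
      using permutes_orbit_subset[of c S s] cycle_permutes[of cs] s cs(1) unfolding c_def by blast
  next
    show "S \<subseteq> orbit c s"
    proof
      fix x assume "x \<in> S"
      then obtain i where i: "i < length cs" "x = cs ! i"
        using cs(1) by (auto simp: in_set_conv_nth)
      have "(c ^^ i) s = rotate i cs ! 0"
        using cyclic_rotation[OF cs(2), of i] len unfolding c_def s_def by (metis nth_map)
      also have "\<dots> = cs ! ((i + 0) mod length cs)"
        by (rule nth_rotate[OF len])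
      also have "\<dots> = x"
        using i by simp
      finally have "x = (c ^^ i) s" ..
      then show "x \<in> orbit c s"
        unfolding c_def orbit_altdef_permutation[OF permutation_of_cycle] by blast
    qed
  qed
  then have "cyclic_on c S"
    using s by (simp add: cyclic_on_singleI)
  then show ?thesis
    by blast
qed

lemma finite_blocks_ex_cyclic_on:
  fixes P :: "'a \<Rightarrow> 'a set"
  assumes self: "\<And>x. x \<in> X \<Longrightarrow> x \<in> P x"
    and fin: "\<And>x. x \<in> X \<Longrightarrow> finite (P x)"
    and eq: "\<And>x y. x \<in> X \<Longrightarrow> y \<in> P x \<Longrightarrow> P y = P x"
  shows "\<exists>f. \<forall>x\<in>X. cyclic_on f (P x)"
proof -
  define c :: "'a set \<Rightarrow> 'a \<Rightarrow> 'a" where "c B = (SOME g. cyclic_on g B)" for B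
  define f where "f x = c (P x) x" for x
  have "cyclic_on f (P x)" if x: "x \<in> X" for x
  proof -
    have "P x \<noteq> {}"
      using self x by blast
    then have "\<exists>g. cyclic_on g (P x)"
      using finite_ex_cyclic_on fin x by blast
    then have "cyclic_on (c (P x)) (P x)"
      unfolding c_def by (rule someI_ex)
    moreover have "f y = c (P x) y" if "y \<in> P x" for y
      using eq[OF x that] unfolding f_def by simp
    ultimately show ?thesis
      using cyclic_cong by blast
  qed
  then show ?thesis by blast
qed

lemma fun_nbhd_eq_cyclic_block:
  assumes cyclic: "\<forall>x\<in>X. cyclic_on f (P x)"
    and self: "\<And>x. x \<in> X \<Longrightarrow> x \<in> P x"
    and sub: "\<And>x. x \<in> X \<Longrightarrow> P x \<subseteq> X"
    and eq: "\<And>x y. x \<in> X \<Longrightarrow> y \<in> P x \<Longrightarrow> P y = P x"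
    and a: "a \<in> X"
  shows "fun_nbhd X f a = P a"
proof
  show "fun_nbhd X f a \<subseteq> P a"
  proof
    fix x assume "x \<in> fun_nbhd X f a"
    then obtain n where x: "x \<in> X" "(f ^^ n) x = a"
      unfolding fun_nbhd_def by blast
    have "(f ^^ n) x \<in> P x"
      using cyclic x(1) self[OF x(1)] by (simp add: cyclic_on_funpow_in)
    then have "P a = P x"
      using eq[OF x(1)] x(2) by simp
    then show "x \<in> P a"
      using self x(1) by simp
  qed
next
  show "P a \<subseteq> fun_nbhd X f a"
  proof
    fix x assume x: "x \<in> P a"
    have "orbit f x = P a"
      using cyclic a x by (simp add: orbit_cyclic_eq3)
    then have "a \<in> orbit f x"
      using self a by blast
    then show "x \<in> fun_nbhd X f a"
      using x sub a unfolding fun_nbhd_def orbit_altdef by blast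
  qed
qed

lemma functional_alexandroffI:
  assumes alex: "alexandroff_space T"
    and f_into: "\<forall>x\<in>topspace T. f x \<in> topspace T"
    and f_nbhd: "\<forall>a\<in>topspace T. fun_nbhd (topspace T) f a = min_nbhd T a"
  shows "functional_alexandroff T"
  unfolding functional_alexandroff_def
proof (intro exI[of _ f] conjI allI iffI)
  fix U assume U: "openin T U"
  then have "fun_nbhd (topspace T) f ` U \<subseteq> fun_nbhd (topspace T) f ` topspace T"
    using openin_subset by blast
  moreover have "U = \<Union>(fun_nbhd (topspace T) f ` U)"
    using openin_eq_Union_min_nbhd[OF U] f_nbhd openin_subset[OF U] by (auto simp: subset_iff)
  ultimately show "\<exists>\<B>. \<B> \<subseteq> fun_nbhd (topspace T) f ` topspace T \<and> U = \<Union>\<B>"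
    by blast
next
  fix U assume "\<exists>\<B>. \<B> \<subseteq> fun_nbhd (topspace T) f ` topspace T \<and> U = \<Union>\<B>"
  moreover have "openin T (fun_nbhd (topspace T) f a)" if "a \<in> topspace T" for a
    using alex f_nbhd that unfolding alexandroff_space_def by simp
  ultimately show "openin T U"
    by (auto intro: openin_Union)
qed (use f_into in blast)

theorem mainTheorem5:
  fixes T :: "'a topology"
  assumes "alexandroff_space T" and "uniformizable T"
  shows "functional_alexandroff T \<longleftrightarrow> (\<forall>x\<in>topspace T. finite (min_nbhd T x))"
proof
  assume "functional_alexandroff T"
  then show "\<forall>x\<in>topspace T. finite (min_nbhd T x)"
    using functional_alexandroff_finite_min_nbhd[OF assms(2)] by simp
next
  assume fin: "\<forall>x\<in>topspace T. finite (min_nbhd T x)"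
  note blocks = uniformizable_min_nbhd_eq[OF assms(2)]
  obtain f where cyclic: "\<forall>x\<in>topspace T. cyclic_on f (min_nbhd T x)"
    using finite_blocks_ex_cyclic_on[of "topspace T" "min_nbhd T", OF in_min_nbhd fin[rule_format] blocks]
    by blast
  have f_nbhd: "\<forall>a\<in>topspace T. fun_nbhd (topspace T) f a = min_nbhd T a"
    using fun_nbhd_eq_cyclic_block[OF cyclic in_min_nbhd min_nbhd_subset_topspace blocks] by simp
  have f_into: "\<forall>x\<in>topspace T. f x \<in> topspace T"
  proof
    fix x assume x: "x \<in> topspace T"
    have "f x \<in> min_nbhd T x"
      using cyclic_on_inI[OF cyclic[rule_format, OF x] in_min_nbhd[of x T]] .
    then show "f x \<in> topspace T"
      using min_nbhd_subset_topspace[OF x] by blast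
  qed
  show "functional_alexandroff T"
    by (rule functional_alexandroffI[OF assms(1) f_into f_nbhd])
qed

end
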